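(* Let $G$ be an $\alpha_i$-metric graph ($i\ge 0$ an integer). For any vertices $x,y,v$ and any integer $k\in\{0,\dots,d(x,y)\}$, there is a vertex $c\in S_k(x,y)$ such that $d(v,c)\le \max\{d(v,x),d(v,y)\}-\min\{d(x,c),d(y,c)\}+i$ and $d(v,c)\le\max\{d(v,x),d(v,y)\}+i/2$. For an arbitrary vertex $z\in I(x,y)$, we have $d(z,v)\le \max\{d(x,v),d(y,v)\}-\min\{d(x,z),d(y,z)\}+2i+1$ and $d(z,v)\le\max\{d(x,v),d(y,v)\}+3i/2+1$. Furthermore, when $v\in F(z)$, $e(z)\le \max\{e(x),e(y)\}-\min\{d(x,z),d(y,z)\}+2i+1$ and $e(z)\le\max\{e(x),e(y)\}+3i/2+1$.
   Context: All graphs are finite, connected, unweighted, undirected, simple; $d(u,v)$ is the shortest-path distance. $I(u,v)=\{x: d(u,x)+d(x,v)=d(u,v)\}$; the slice is $S_k(u,v)=\{x\in I(u,v): d(u,x)=k\}$. A graph is $\alpha_i$-metric if for all vertices $u,v,w,x$: whenever $v\in I(u,w)$, $w\in I(v,x)$ and $v,w$ are adjacent, then $d(u,x)\ge d(u,v)+d(v,x)-i$. $e(v)=\max_u d(u,v)$ and $F(z)=\{u: d(u,z)=e(z)\}$ is the set of vertices most distant from $z$. *)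

theory Defs
  imports Complex_Main
begin

definition graph :: "'a set \<Rightarrow> ('a \<Rightarrow> 'a \<Rightarrow> bool) \<Rightarrow> bool" where
  "graph V E \<longleftrightarrow> finite V \<and> V \<noteq> {} \<and>
     (\<forall>x y. E x y \<longrightarrow> x \<in> V \<and> y \<in> V) \<and>
     (\<forall>x y. E x y \<longrightarrow> E y x) \<and> (\<forall>x. \<not> E x x)"

definition walk :: "('a \<Rightarrow> 'a \<Rightarrow> bool) \<Rightarrow> 'a list \<Rightarrow> bool" where
  "walk E xs \<longleftrightarrow> xs \<noteq> [] \<and> (\<forall>j. Suc j < length xs \<longrightarrow> E (xs ! j) (xs ! Suc j))"

definition connected_graph :: "'a set \<Rightarrow> ('a \<Rightarrow> 'a \<Rightarrow> bool) \<Rightarrow> bool" where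
  "connected_graph V E \<longleftrightarrow> graph V E \<and>
     (\<forall>u\<in>V. \<forall>v\<in>V. \<exists>xs. walk E xs \<and> hd xs = u \<and> last xs = v)"

definition dist :: "('a \<Rightarrow> 'a \<Rightarrow> bool) \<Rightarrow> 'a \<Rightarrow> 'a \<Rightarrow> nat" where
  "dist E u v = (LEAST n. \<exists>xs. walk E xs \<and> hd xs = u \<and> last xs = v \<and> length xs = Suc n)"

definition interval :: "'a set \<Rightarrow> ('a \<Rightarrow> 'a \<Rightarrow> bool) \<Rightarrow> 'a \<Rightarrow> 'a \<Rightarrow> 'a set" where
  "interval V E u v = {x \<in> V. dist E u x + dist E x v = dist E u v}"

definition slice :: "'a set \<Rightarrow> ('a \<Rightarrow> 'a \<Rightarrow> bool) \<Rightarrow> nat \<Rightarrow> 'a \<Rightarrow> 'a \<Rightarrow> 'a set" where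
  "slice V E k u v = {x \<in> interval V E u v. dist E u x = k}"

definition alpha_metric :: "nat \<Rightarrow> 'a set \<Rightarrow> ('a \<Rightarrow> 'a \<Rightarrow> bool) \<Rightarrow> bool" where
  "alpha_metric i V E \<longleftrightarrow>
     (\<forall>u\<in>V. \<forall>v\<in>V. \<forall>w\<in>V. \<forall>x\<in>V.
        v \<in> interval V E u w \<and> w \<in> interval V E v x \<and> E v w \<longrightarrow>
        int (dist E u x) \<ge> int (dist E u v) + int (dist E v x) - int i)"

definition ecc :: "'a set \<Rightarrow> ('a \<Rightarrow> 'a \<Rightarrow> bool) \<Rightarrow> 'a \<Rightarrow> nat" where
  "ecc V E v = Max ((\<lambda>u. dist E u v) ` V)"

definition farthest :: "'a set \<Rightarrow> ('a \<Rightarrow> 'a \<Rightarrow> bool) \<Rightarrow> 'a \<Rightarrow> 'a set" where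
  "farthest V E z = {u \<in> V. dist E u z = ecc V E z}"

end

theory Submission
  imports Defs
begin

text \<open>Fix k and let c be a vertex of the slice S_k(x,y) closest to v. If c \<noteq> v, take a
  neighbour w of c one step closer to v. If w is one step farther from x than c, the
  \<open>\<alpha>\<^sub>i\<close>-condition for the edge cw gives d(x,c) + d(c,v) \<le> d(x,v) + i, and
  symmetrically for y; otherwise w lies in the same slice and is closer to v, contradicting
  the choice of c. Together with the triangle inequality this yields both bounds on d(v,c).
  The \<open>\<alpha>\<^sub>i\<close>-condition also shows that every slice of I(x,y) has diameter at most i + 1,
  so an arbitrary z \<in> I(x,y) is within i + 1 of such a c; for v \<in> F(z) finally
  e(z) = d(z,v), d(x,v) \<le> e(x) and d(y,v) \<le> e(y).\<close>

lemma walk_iff_successively: "walk E xs \<longleftrightarrow> xs \<noteq> [] \<and> successively E xs"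
  by (simp add: walk_def successively_conv_nth)

lemma dist_less_walk_length:
  assumes "walk E xs" "hd xs = u" "last xs = v"
  shows "dist E u v < length xs"
proof -
  have "length xs = Suc (length xs - 1)"
    using assms(1) by (simp add: walk_def)
  then have "dist E u v \<le> length xs - 1"
    unfolding dist_def using assms by (intro Least_le) blast
  then show ?thesis
    using assms(1) by (cases xs) (simp_all add: walk_def)
qed

lemma dist_attained:
  assumes "walk E xs" "hd xs = u" "last xs = v"
  shows "\<exists>ys. walk E ys \<and> hd ys = u \<and> last ys = v \<and> length ys = Suc (dist E u v)"
proof -
  have "length xs = Suc (length xs - 1)"
    using assms(1) by (simp add: walk_def)
  then have "\<exists>n ys. walk E ys \<and> hd ys = u \<and> last ys = v \<and> length ys = Suc n"
    using assms by blast
  then show ?thesis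
    unfolding dist_def by (rule LeastI_ex)
qed

lemma dist_self [simp]: "dist E u u = 0"
  using dist_less_walk_length[of E "[u]"] by (simp add: walk_def)

locale finite_connected_graph =
  fixes V :: "'a set" and E :: "'a \<Rightarrow> 'a \<Rightarrow> bool"
  assumes connected: "connected_graph V E"
begin

lemma finite_vertices: "finite V"
  using connected by (simp add: connected_graph_def graph_def)

lemma edge_sym: "E u v \<Longrightarrow> E v u"
  using connected by (simp add: connected_graph_def graph_def)

lemma edge_vertices: "E u v \<Longrightarrow> u \<in> V \<and> v \<in> V"
  using connected by (simp add: connected_graph_def graph_def)

lemma edge_neq: "E u v \<Longrightarrow> u \<noteq> v"
  using connected by (auto simp: connected_graph_def graph_def)

lemma walk_rev: "walk E xs \<Longrightarrow> walk E (rev xs)"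
  by (auto simp: walk_iff_successively intro: successively_mono edge_sym)

lemma walk_append_tl:
  assumes "walk E xs" "walk E ys" "last xs = hd ys"
  shows "walk E (xs @ tl ys)"
  using assms by (cases ys) (auto simp: walk_iff_successively successively_append_iff successively_Cons)

lemma shortest_walk:
  assumes "u \<in> V" "v \<in> V"
  obtains xs where "walk E xs" "hd xs = u" "last xs = v" "length xs = Suc (dist E u v)"
  using assms connected dist_attained unfolding connected_graph_def by metis

text \<open>No vertex hypotheses are needed: if there is no walk between u and v, both
  sides are the same unspecified value LEAST n. False.\<close>
lemma dist_commute: "dist E u v = dist E v u"
proof -
  have rev: "\<exists>ys. walk E ys \<and> hd ys = b \<and> last ys = a \<and> length ys = n"
    if "walk E xs" "hd xs = a" "last xs = b" "length xs = n" for xs a b n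
    using that walk_rev[of xs] by (intro exI[of _ "rev xs"]) (auto simp: walk_def hd_rev last_rev)
  show ?thesis
    unfolding dist_def by (rule arg_cong[where f = Least], rule ext) (use rev in blast)
qed

lemma dist_triangle:
  assumes "u \<in> V" "v \<in> V" "w \<in> V"
  shows "dist E u w \<le> dist E u v + dist E v w"
proof -
  obtain xs where xs: "walk E xs" "hd xs = u" "last xs = v" "length xs = Suc (dist E u v)"
    using shortest_walk assms(1,2) .
  obtain ys where ys: "walk E ys" "hd ys = v" "last ys = w" "length ys = Suc (dist E v w)"
    using shortest_walk assms(2,3) .
  have "hd (xs @ tl ys) = u"
    using xs(1,2) by (cases xs) (auto simp: walk_def)
  moreover have "last (xs @ tl ys) = w"
    using xs(3) ys(1,2,3) by (cases ys) (auto simp: walk_def)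
  ultimately have "dist E u w < length (xs @ tl ys)"
    using xs ys by (intro dist_less_walk_length walk_append_tl) simp_all
  then show ?thesis
    using xs(4) ys(4) by simp
qed

lemma dist_eq_0_iff:
  assumes "u \<in> V" "v \<in> V"
  shows "dist E u v = 0 \<longleftrightarrow> u = v"
proof
  assume "dist E u v = 0"
  moreover obtain xs where "walk E xs" "hd xs = u" "last xs = v" "length xs = Suc (dist E u v)"
    using shortest_walk assms .
  ultimately show "u = v"
    by (cases xs) auto
qed simp

lemma dist_edge: "E u v \<Longrightarrow> dist E u v = 1"
  using dist_less_walk_length[of E "[u, v]" u v] dist_eq_0_iff edge_vertices edge_neq
  by (fastforce simp: walk_def nth_Cons split: nat.splits)

lemma dist_edge_le:
  assumes "E u w" "v \<in> V"
  shows "dist E v w \<le> dist E v u + 1"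
  using dist_triangle[of v u w] dist_edge[OF assms(1)] edge_vertices[OF assms(1)] assms(2)
  by simp

lemma dist_SucE:
  assumes "u \<in> V" "v \<in> V" "dist E u v = Suc n"
  obtains w where "E u w" "dist E w v = n"
proof -
  obtain xs where xs: "walk E xs" "hd xs = u" "last xs = v" "length xs = Suc (dist E u v)"
    using shortest_walk assms(1,2) .
  have "length xs = Suc (Suc n)"
    using xs(4) assms(3) by simp
  then obtain ys where ys: "xs = u # ys" "ys \<noteq> []"
    using xs(2) by (auto simp: length_Suc_conv)
  have w: "E u (hd ys)" "walk E ys"
    using xs(1) ys by (auto simp: walk_iff_successively successively_Cons)
  have "dist E (hd ys) v \<le> n"
    using dist_less_walk_length[OF w(2) refl refl] xs(3,4) ys assms(3) by simp
  moreover have "n \<le> dist E (hd ys) v"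
    using dist_edge_le[OF edge_sym[OF w(1)] assms(2)] assms(3) dist_commute[of v] by simp
  ultimately show ?thesis
    using that w(1) by simp
qed

lemma mem_slice_iff:
  "c \<in> slice V E k x y \<longleftrightarrow> c \<in> V \<and> dist E x c = k \<and> k + dist E c y = dist E x y"
  unfolding slice_def interval_def by auto

lemma slice_SucE:
  assumes c: "c \<in> slice V E k x y" and "x \<in> V" "y \<in> V" "k < dist E x y"
  obtains c' where "E c c'" "c' \<in> slice V E (Suc k) x y"
proof -
  obtain r where r: "dist E c y = Suc r"
    using c assms(4) by (cases "dist E c y") (auto simp: mem_slice_iff)
  moreover have "c \<in> V"
    using c by (simp add: mem_slice_iff)
  ultimately obtain c' where c': "E c c'" "dist E c' y = r"
    using dist_SucE assms(3) by blast
  have "dist E x c' \<le> Suc k"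
    using dist_edge_le[OF c'(1) assms(2)] c by (simp add: mem_slice_iff)
  moreover have "dist E x y \<le> dist E x c' + dist E c' y"
    using dist_triangle assms(2,3) edge_vertices[OF c'(1)] by blast
  ultimately have "c' \<in> slice V E (Suc k) x y"
    using c r c' edge_vertices[OF c'(1)] by (simp add: mem_slice_iff)
  with c'(1) show ?thesis
    using that by blast
qed

lemma slice_nonempty:
  assumes "x \<in> V" "y \<in> V" "k \<le> dist E x y"
  shows "\<exists>c. c \<in> slice V E k x y"
  using assms(3)
proof (induction k)
  case 0
  show ?case
    using assms(1) by (intro exI[of _ x]) (simp add: mem_slice_iff)
next
  case (Suc k)
  then obtain c where "c \<in> slice V E k x y"
    by auto
  then show ?case
    using slice_SucE assms(1,2) Suc.prems by (metis Suc_le_lessD)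
qed

end

locale alpha_metric_graph = finite_connected_graph +
  fixes i :: nat
  assumes alpha_metric: "alpha_metric i V E"
begin

lemma alpha_metricD:
  assumes pq: "E p q" and "u \<in> V" "t \<in> V"
    and "dist E u q = dist E u p + 1" "dist E p t = dist E q t + 1"
  shows "dist E u p + dist E p t \<le> dist E u t + i"
proof -
  have "p \<in> interval V E u q" "q \<in> interval V E p t"
    using assms edge_vertices[OF pq] dist_edge[OF pq] unfolding interval_def by auto
  then have "int (dist E u t) \<ge> int (dist E u p) + int (dist E p t) - int i"
    using alpha_metric assms(2,3) edge_vertices[OF pq] pq unfolding alpha_metric_def by blast
  then show ?thesis
    by linarith
qed

lemma dist_eq_across_geodesic_edge:
  assumes ab: "E a b" and "x \<in> V" "y \<in> V" "p \<in> V"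
    and "dist E x b = dist E x a + 1" "dist E a y = dist E b y + 1"
    and "dist E x p \<le> dist E x a + 1" "dist E p y \<le> dist E a y"
    and far: "i + 2 \<le> dist E p a"
  shows "dist E p b = dist E p a"
proof -
  have "dist E p b \<noteq> dist E p a + 1"
  proof
    assume "dist E p b = dist E p a + 1"
    then have "dist E p a + dist E a y \<le> dist E p y + i"
      using alpha_metricD[OF ab] assms by blast
    then show False
      using assms by linarith
  qed
  moreover have "dist E p a \<noteq> dist E p b + 1"
  proof
    assume pa: "dist E p a = dist E p b + 1"
    then have "dist E p b + dist E b x \<le> dist E p x + i"
      using alpha_metricD[OF edge_sym[OF ab]] assms dist_commute[of _ x] by metis
    then show False
      using pa assms dist_commute[of b x] dist_commute[of p x] by linarith
  qed
  ultimately show ?thesis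
    using dist_edge_le[OF ab \<open>p \<in> V\<close>] dist_edge_le[OF edge_sym[OF ab] \<open>p \<in> V\<close>] by linarith
qed

lemma slice_diameter:
  assumes "x \<in> V" "y \<in> V" "z \<in> slice V E k x y" "c \<in> slice V E k x y"
  shows "dist E z c \<le> i + 1"
  using assms(3,4)
proof (induction "dist E x y - k" arbitrary: k z c)
  case 0
  then have "dist E z y = 0" "dist E c y = 0" "z \<in> V" "c \<in> V"
    by (auto simp: mem_slice_iff)
  then have "z = y" "c = y"
    using dist_eq_0_iff assms(2) by blast+
  then show ?case
    by simp
next
  case (Suc n)
  then have "k < dist E x y"
    by linarith
  then obtain z' c' where z': "E z z'" "z' \<in> slice V E (Suc k) x y"
    and c': "E c c'" "c' \<in> slice V E (Suc k) x y"
    using slice_SucE Suc.prems assms(1,2) by metis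
  have IH: "dist E z' c' \<le> i + 1"
    using Suc.hyps(1)[of "Suc k"] Suc.hyps(2) z'(2) c'(2) by simp
  note slices = Suc.prems[unfolded mem_slice_iff] z'(2)[unfolded mem_slice_iff]
    c'(2)[unfolded mem_slice_iff]
  show ?case
  proof (rule ccontr)
    txt \<open>Moving first c and then z one slice towards y keeps a distance of at least
      i + 2 unchanged, contradicting the induction hypothesis.\<close>
    assume "\<not> ?case"
    then have far: "i + 2 \<le> dist E z c"
      by simp
    have zc': "dist E z c' = dist E z c"
      by (rule dist_eq_across_geodesic_edge[OF c'(1) assms(1,2)]) (use slices far in linarith)+
    have "dist E c' z' = dist E c' z"
      by (rule dist_eq_across_geodesic_edge[OF z'(1) assms(1,2)])
        (use slices far zc' dist_commute[of z c'] in linarith)+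
    then show False
      using IH far zc' dist_commute[of z' c'] dist_commute[of z c'] by linarith
  qed
qed

lemma slice_vertex_near_geodesicE:
  assumes "x \<in> V" "y \<in> V" "v \<in> V" "k \<le> dist E x y"
  obtains c where "c \<in> slice V E k x y"
    "dist E v c + dist E x c \<le> dist E v x + i \<or> dist E v c + dist E y c \<le> dist E v y + i"
proof -
  obtain c0 where "c0 \<in> slice V E k x y"
    using slice_nonempty[OF assms(1,2,4)] by blast
  then obtain c where c: "c \<in> slice V E k x y"
    and closest: "\<And>c'. c' \<in> slice V E k x y \<Longrightarrow> dist E c v \<le> dist E c' v"
    using ex_has_least_nat[of "\<lambda>c. c \<in> slice V E k x y" c0 "\<lambda>c. dist E c v"] by blast
  have cV: "c \<in> V"
    using c by (simp add: mem_slice_iff)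
  show thesis
  proof (cases "c = v")
    case True
    then show thesis
      using that c dist_commute[of v x] by simp
  next
    case False
    then obtain r where "dist E c v = Suc r"
      using dist_eq_0_iff[OF cV assms(3)] not0_implies_Suc by blast
    then obtain w where w: "E c w" "dist E w v = r"
      using dist_SucE[OF cV assms(3)] by blast
    have wV: "w \<in> V"
      using edge_vertices[OF w(1)] by blast
    have cw: "dist E c v = dist E w v + 1"
      using \<open>dist E c v = Suc r\<close> w(2) by simp
    consider "dist E x w = dist E x c + 1" | "dist E y w = dist E y c + 1"
      | "dist E x w \<le> dist E x c" "dist E y w \<le> dist E y c"
      using dist_edge_le[OF w(1) assms(1)] dist_edge_le[OF w(1) assms(2)] by linarith
    then show thesis
    proof cases
      case 1
      then have "dist E x c + dist E c v \<le> dist E x v + i"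
        using alpha_metricD[OF w(1) assms(1,3)] cw by blast
      then show thesis
        using that c dist_commute[of v] by simp
    next
      case 2
      then have "dist E y c + dist E c v \<le> dist E y v + i"
        using alpha_metricD[OF w(1) assms(2,3)] cw by blast
      then show thesis
        using that c dist_commute[of v] by simp
    next
      case 3
      have "dist E x y \<le> dist E x w + dist E w y"
        using dist_triangle assms(1,2) wV by blast
      then have "w \<in> slice V E k x y"
        using 3 c wV dist_commute[of w y] dist_commute[of c y] by (simp add: mem_slice_iff)
      then show thesis
        using closest cw by fastforce
    qed
  qed
qed

lemma slice_vertex_bounds:
  assumes "x \<in> V" "y \<in> V" "v \<in> V" "k \<le> dist E x y"
  shows "\<exists>c \<in> slice V E k x y.
            real (dist E v c) \<le> real (max (dist E v x) (dist E v y))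
                                 - real (min (dist E x c) (dist E y c)) + real i
          \<and> real (dist E v c) \<le> real (max (dist E v x) (dist E v y)) + real i / 2"
proof -
  obtain c where c: "c \<in> slice V E k x y" and near:
    "dist E v c + dist E x c \<le> dist E v x + i \<or> dist E v c + dist E y c \<le> dist E v y + i"
    using slice_vertex_near_geodesicE[OF assms] .
  have "dist E v c \<le> dist E v x + dist E x c" "dist E v c \<le> dist E v y + dist E y c"
    using dist_triangle c assms by (auto simp: mem_slice_iff)
  with near show ?thesis
    using c by (intro bexI[of _ c]) (auto simp: max_def min_def)
qed

lemma interval_vertex_bounds:
  assumes "x \<in> V" "y \<in> V" "v \<in> V" and z: "z \<in> interval V E x y"
  shows "real (dist E z v) \<le> real (max (dist E x v) (dist E y v))
                                 - real (min (dist E x z) (dist E y z)) + 2 * real i + 1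
          \<and> real (dist E z v) \<le> real (max (dist E x v) (dist E y v)) + 3 * real i / 2 + 1"
proof -
  have zk: "z \<in> slice V E (dist E x z) x y"
    using z by (simp add: slice_def)
  have "dist E x z \<le> dist E x y"
    using z by (simp add: interval_def)
  then obtain c where c: "c \<in> slice V E (dist E x z) x y" and bounds:
    "real (dist E v c) \<le> real (max (dist E v x) (dist E v y))
                                 - real (min (dist E x c) (dist E y c)) + real i"
    "real (dist E v c) \<le> real (max (dist E v x) (dist E v y)) + real i / 2"
    using slice_vertex_bounds[OF assms(1-3)] by blast
  have "dist E z v \<le> dist E z c + dist E c v"
    using dist_triangle c zk assms(3) by (simp add: mem_slice_iff)
  moreover have "dist E z c \<le> i + 1"
    using slice_diameter[OF assms(1,2) zk c] .
  moreover have "dist E x c = dist E x z" "dist E y c = dist E y z"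
    using zk c dist_commute[of y z] dist_commute[of y c] by (auto simp: mem_slice_iff)
  moreover have "max (dist E x v) (dist E y v) = max (dist E v x) (dist E v y)"
    using dist_commute[of v] by simp
  ultimately show ?thesis
    using bounds dist_commute[of c v] by simp
qed

lemma dist_le_ecc: "v \<in> V \<Longrightarrow> dist E v x \<le> ecc V E x"
  unfolding ecc_def using finite_vertices by (intro Max_ge) auto

lemma interval_ecc_bounds:
  assumes "x \<in> V" "y \<in> V" "v \<in> V" "z \<in> interval V E x y" "v \<in> farthest V E z"
  shows "real (ecc V E z) \<le> real (max (ecc V E x) (ecc V E y))
                                    - real (min (dist E x z) (dist E y z)) + 2 * real i + 1
             \<and> real (ecc V E z) \<le> real (max (ecc V E x) (ecc V E y)) + 3 * real i / 2 + 1"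
proof -
  have "ecc V E z = dist E z v"
    using assms(5) dist_commute[of v] by (simp add: farthest_def)
  moreover have "max (dist E x v) (dist E y v) \<le> max (ecc V E x) (ecc V E y)"
    using dist_le_ecc[OF assms(3)] dist_commute[of v] by (simp add: max.coboundedI1 max.coboundedI2 max.mono)
  ultimately show ?thesis
    using interval_vertex_bounds[OF assms(1-4)] by (simp only: of_nat_le_iff) linarith
qed

end

theorem lemma4:
  fixes V :: "'a set" and E :: "'a \<Rightarrow> 'a \<Rightarrow> bool" and i :: nat
  assumes G: "connected_graph V E"
    and am: "alpha_metric i V E"
    and xV: "x \<in> V" and yV: "y \<in> V" and vV: "v \<in> V"
  shows "(\<forall>k \<le> dist E x y. \<exists>c \<in> slice V E k x y.
            real (dist E v c) \<le> real (max (dist E v x) (dist E v y))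
                                 - real (min (dist E x c) (dist E y c)) + real i
          \<and> real (dist E v c) \<le> real (max (dist E v x) (dist E v y)) + real i / 2)
       \<and> (\<forall>z \<in> interval V E x y.
            real (dist E z v) \<le> real (max (dist E x v) (dist E y v))
                                 - real (min (dist E x z) (dist E y z)) + 2 * real i + 1
          \<and> real (dist E z v) \<le> real (max (dist E x v) (dist E y v)) + 3 * real i / 2 + 1
          \<and> (v \<in> farthest V E z \<longrightarrow>
               real (ecc V E z) \<le> real (max (ecc V E x) (ecc V E y))
                                    - real (min (dist E x z) (dist E y z)) + 2 * real i + 1
             \<and> real (ecc V E z) \<le> real (max (ecc V E x) (ecc V E y)) + 3 * real i / 2 + 1))"
proof -
  interpret alpha_metric_graph V E i
    using G am by unfold_locales
  show ?thesis
    using slice_vertex_bounds[OF xV yV vV] interval_vertex_bounds[OF xV yV vV]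
      interval_ecc_bounds[OF xV yV vV] by blast
qed

end
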